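(* Let $N\ge 2$ and $d\ge 1$. Let $L^{\sharp}(\mathbf q^{(0)},\dots,\mathbf q^{(N-1)},t)$ be an $(N-1)$-th order Lagrangian (possibly singular, possibly explicitly time dependent) in the coordinates $q^i$, $i=1,\dots,d$. Suppose its Ostrogradski canonical theory has only first-class constraints $\gamma^{\sharp}_a(\mathbf q_\sharp,\mathbf p^\sharp,t)\approx 0$ (primary and secondary), and canonical Hamiltonian $H^{\sharp}(\mathbf q_\sharp,\mathbf p^\sharp,t)$. Assume $H^\sharp$ and all $\gamma^\sharp_a$ are polynomials in the momenta $p^\sharp_{Ai}$, quantized with a fixed operator ordering. Let $W(\mathbf q^{(0)},\dots,\mathbf q^{(N-1)},t)$ be an arbitrary smooth function, and put $$L:=L^\sharp+\frac{dW}{dt},$$ an $N$-th order Lagrangian. Treat $L$ by the extended Ostrogradski formalism described in the context. Its quantum mechanics is then given by three conditions on wave functions $\psi(\mathbf q,t)$, where $\mathbf q=(q^{Ii})_{I=0,\dots,N-1}$: $$i\hbar\,\partial_t\psi=\Big[\hat H^\sharp\Big(\mathbf q_\sharp,\,-i\hbar\tfrac{\partial}{\partial \mathbf q_\sharp}-\tfrac{\partial W}{\partial \mathbf q_\sharp},\,t\Big)-\tfrac{\partial W}{\partial t}\Big]\psi,$$ $$\Big(-i\hbar\tfrac{\partial}{\partial q^{N-1,i}}-\tfrac{\partial W}{\partial q^{N-1,i}}\Big)\psi=0\quad (i=1,\dots,d),$$ $$\hat\gamma^\sharp_a\Big(\mathbf q_\sharp,\,-i\hbar\tfrac{\partial}{\partial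 \mathbf q_\sharp}-\tfrac{\partial W}{\partial \mathbf q_\sharp},\,t\Big)\psi=0\quad\text{for all }a .$$ The quantum mechanics of $L^\sharp$ is given by two conditions on wave functions $\psi^\sharp(\mathbf q_\sharp,t)$: $$i\hbar\,\partial_t\psi^\sharp=\hat H^\sharp\Big(\mathbf q_\sharp,-i\hbar\tfrac{\partial}{\partial\mathbf q_\sharp},t\Big)\psi^\sharp,\qquad \hat\gamma^\sharp_a\Big(\mathbf q_\sharp,-i\hbar\tfrac{\partial}{\partial\mathbf q_\sharp},t\Big)\psi^\sharp=0 .$$ Then a function $\psi(\mathbf q,t)$ satisfies the three conditions for $L$ if and only if $$\psi(\mathbf q,t)=\psi^\sharp(\mathbf q_\sharp,t)\exp\!\big(iW(\mathbf q,t)/\hbar\big)$$ for a function $\psi^\sharp$ satisfying the two conditions for $L^\sharp$. Thus the $N$-th order Lagrangian $L$ and the $(N-1)$-th order Lagrangian $L^\sharp$ lead to the same quantum mechanics.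
   Context: Ostrogradski formalism: for an $N$-th order Lagrangian $L(\mathbf q^{(0)},\dots,\mathbf q^{(N)},t)$ with $q^{(I)i}=d^Iq^i/dt^I$, the canonical variables are $q^{Ii}:=q^{(I)i}$ and $p_{Ii}:=\sum_{K=I+1}^{N}(-d/dt)^{K-I-1}\partial L/\partial q^{(K)i}$, for $I=0,\dots,N-1$. The Poisson bracket is $\{F,G\}=\sum_{I,i}\big(\partial_{q^{Ii}}F\,\partial_{p_{Ii}}G-\partial_{p_{Ii}}F\,\partial_{q^{Ii}}G\big)$. Quantization (Dirac): when all constraints are first class, one uses the Schrödinger picture with $\hat q^{Ii}=q^{Ii}$ and $\hat p_{Ii}=-i\hbar\,\partial/\partial q^{Ii}$. The wave function obeys $i\hbar\partial_t\psi=\hat H\psi$ with $H$ the canonical Hamiltonian, and satisfies $\hat\gamma\psi=0$ for every first-class constraint $\gamma$. Notation: indices $A,B$ run over $0,\dots,N-2$; $\mathbf q_\sharp=(q^{Ai})$ and $\mathbf p^\sharp=(p^\sharp_{Ai})$ are the Ostrogradski variables of $L^\sharp$. Repeated indices are summed. Extended formalism for $L$: the phase space has coordinates $q^{Ii},p_{Ii}$, $I=0,\dots,N-1$. Define the shifted momenta $p^\sharp_{Ai}:=p_{Ai}-\partial W/\partial q^{Ai}$. The canonical Hamiltonian is $H(\mathbf q,\mathbf p,t)=H^\sharp(\mathbf q_\sharp,\mathbf p^\sharp,t)-\partial W/\partial t$. The constraints are $\gamma_i:=p_{N-1,i}-\partial W/\partial q^{N-1,i}\approx 0$ together with the $\gamma^\sharp_a(\mathbf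 q_\sharp,\mathbf p^\sharp,t)\approx0$, all of which are first class. *)

theory Defs
  imports "HOL-Analysis.Analysis"
begin

text \<open>Configurations: q I i is the coordinate q^{I i}; only I < n and i < d are used
  (index i = 1..d of the paper is shifted to 0..d-1). Other entries are fixed to 0.\<close>
type_synonym cfg = "nat \<Rightarrow> nat \<Rightarrow> real"
type_synonym wfun = "cfg \<Rightarrow> real \<Rightarrow> complex"

definition cfgs :: "nat \<Rightarrow> nat \<Rightarrow> cfg set" where
  "cfgs n d = {q. \<forall>I i. (n \<le> I \<or> d \<le> i) \<longrightarrow> q I i = 0}"

definition cupd :: "cfg \<Rightarrow> nat \<Rightarrow> nat \<Rightarrow> real \<Rightarrow> cfg" where
  "cupd q I i s = q(I := (q I)(i := s))"

definition sharp :: "nat \<Rightarrow> nat \<Rightarrow> cfg \<Rightarrow> cfg" where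
  "sharp N d q = (\<lambda>I i. if I < N - 1 \<and> i < d then q I i else 0)"

definition has_pd :: "cfg set \<Rightarrow> (cfg \<Rightarrow> real \<Rightarrow> 'b::real_normed_vector) \<Rightarrow> nat \<Rightarrow> nat
     \<Rightarrow> (cfg \<Rightarrow> real \<Rightarrow> 'b) \<Rightarrow> bool" where
  "has_pd Q F I i G \<longleftrightarrow>
     (\<forall>q\<in>Q. \<forall>t. ((\<lambda>s. F (cupd q I i s) t) has_vector_derivative G q t) (at (q I i)))"

definition has_pt :: "cfg set \<Rightarrow> (cfg \<Rightarrow> real \<Rightarrow> 'b::real_normed_vector)
     \<Rightarrow> (cfg \<Rightarrow> real \<Rightarrow> 'b) \<Rightarrow> bool" where
  "has_pt Q F G \<longleftrightarrow> (\<forall>q\<in>Q. \<forall>t. ((\<lambda>s. F q s) has_vector_derivative G q t) (at t))"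

definition pd :: "(cfg \<Rightarrow> real \<Rightarrow> real) \<Rightarrow> nat \<Rightarrow> nat \<Rightarrow> cfg \<Rightarrow> real \<Rightarrow> real" where
  "pd F I i q t = vector_derivative (\<lambda>s. F (cupd q I i s) t) (at (q I i))"

definition pt :: "(cfg \<Rightarrow> real \<Rightarrow> real) \<Rightarrow> cfg \<Rightarrow> real \<Rightarrow> real" where
  "pt F q t = vector_derivative (\<lambda>s. F q s) (at t)"

text \<open>Smooth (C-infinity) real functions of (q,t) on cfgs n d: all iterated partial
  derivatives (in the coordinates q^{I i}, I<n, i<d, and in t) exist.\<close>
coinductive smooth_cfg :: "nat \<Rightarrow> nat \<Rightarrow> (cfg \<Rightarrow> real \<Rightarrow> real) \<Rightarrow> bool" for n d where
  "(\<forall>I<n. \<forall>i<d. \<exists>G. has_pd (cfgs n d) F I i G \<and> smooth_cfg n d G) \<Longrightarrow>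
   (\<exists>G. has_pt (cfgs n d) F G \<and> smooth_cfg n d G) \<Longrightarrow> smooth_cfg n d F"

text \<open>This covers every polynomial in the momenta with any fixed operator ordering.\<close>
datatype qop = QMul "cfg \<Rightarrow> real \<Rightarrow> complex" | QMom nat nat | QComp qop qop | QAdd qop qop

fun qop_wf :: "nat \<Rightarrow> nat \<Rightarrow> qop \<Rightarrow> bool" where
  "qop_wf n d (QMul c) = True"
| "qop_wf n d (QMom A i) = (A < n \<and> i < d)"
| "qop_wf n d (QComp e1 e2) = (qop_wf n d e1 \<and> qop_wf n d e2)"
| "qop_wf n d (QAdd e1 e2) = (qop_wf n d e1 \<and> qop_wf n d e2)"

inductive op_app :: "(nat \<Rightarrow> nat \<Rightarrow> wfun \<Rightarrow> wfun \<Rightarrow> bool) \<Rightarrow> (cfg \<Rightarrow> cfg)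
    \<Rightarrow> qop \<Rightarrow> wfun \<Rightarrow> wfun \<Rightarrow> bool" for mom proj where
  "op_app mom proj (QMul c) \<psi> (\<lambda>q t. c (proj q) t * \<psi> q t)"
| "mom A i \<psi> \<phi> \<Longrightarrow> op_app mom proj (QMom A i) \<psi> \<phi>"
| "op_app mom proj e2 \<psi> \<psi>m \<Longrightarrow> op_app mom proj e1 \<psi>m \<phi> \<Longrightarrow> op_app mom proj (QComp e1 e2) \<psi> \<phi>"
| "op_app mom proj e1 \<psi> \<phi>1 \<Longrightarrow> op_app mom proj e2 \<psi> \<phi>2 \<Longrightarrow>
   op_app mom proj (QAdd e1 e2) \<psi> (\<lambda>q t. \<phi>1 q t + \<phi>2 q t)"

definition mom_shift :: "real \<Rightarrow> cfg set \<Rightarrow> (cfg \<Rightarrow> real \<Rightarrow> real)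
    \<Rightarrow> nat \<Rightarrow> nat \<Rightarrow> wfun \<Rightarrow> wfun \<Rightarrow> bool" where
  "mom_shift hbar Q W A i \<psi> \<phi> \<longleftrightarrow> (\<exists>G. has_pd Q \<psi> A i G \<and>
     (\<forall>q\<in>Q. \<forall>t. \<phi> q t = - \<i> * complex_of_real hbar * G q t
                          - complex_of_real (pd W A i q t) * \<psi> q t))"

definition mom_std :: "real \<Rightarrow> cfg set \<Rightarrow> nat \<Rightarrow> nat \<Rightarrow> wfun \<Rightarrow> wfun \<Rightarrow> bool" where
  "mom_std hbar Q A i \<psi> \<phi> \<longleftrightarrow> (\<exists>G. has_pd Q \<psi> A i G \<and>
     (\<forall>q\<in>Q. \<forall>t. \<phi> q t = - \<i> * complex_of_real hbar * G q t))"

definition quantum_L :: "nat \<Rightarrow> nat \<Rightarrow> real \<Rightarrow> (cfg \<Rightarrow> real \<Rightarrow> real) \<Rightarrow> qop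
    \<Rightarrow> ('a \<Rightarrow> qop) \<Rightarrow> wfun \<Rightarrow> bool" where
  "quantum_L N d hbar W H \<gamma> \<psi> \<longleftrightarrow>
     (let Q = cfgs N d; mom = mom_shift hbar Q W; proj = sharp N d in
       (\<exists>Gt \<phi>. has_pt Q \<psi> Gt \<and> op_app mom proj H \<psi> \<phi> \<and>
          (\<forall>q\<in>Q. \<forall>t. \<i> * complex_of_real hbar * Gt q t
                        = \<phi> q t - complex_of_real (pt W q t) * \<psi> q t))
     \<and> (\<forall>i<d. mom (N - 1) i \<psi> (\<lambda>_ _. 0))
     \<and> (\<forall>a. \<exists>\<phi>. op_app mom proj (\<gamma> a) \<psi> \<phi> \<and> (\<forall>q\<in>Q. \<forall>t. \<phi> q t = 0)))"

definition quantum_Lsharp :: "nat \<Rightarrow> nat \<Rightarrow> real \<Rightarrow> qop \<Rightarrow> ('a \<Rightarrow> qop) \<Rightarrow> wfun \<Rightarrow> bool" where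
  "quantum_Lsharp N d hbar H \<gamma> \<psi> \<longleftrightarrow>
     (let Q = cfgs (N - 1) d; mom = mom_std hbar Q; proj = id in
       (\<exists>Gt \<phi>. has_pt Q \<psi> Gt \<and> op_app mom proj H \<psi> \<phi> \<and>
          (\<forall>q\<in>Q. \<forall>t. \<i> * complex_of_real hbar * Gt q t = \<phi> q t))
     \<and> (\<forall>a. \<exists>\<phi>. op_app mom proj (\<gamma> a) \<psi> \<phi> \<and> (\<forall>q\<in>Q. \<forall>t. \<phi> q t = 0)))"

end

theory Submission imports Defs begin

(* Multiplication by the phase exp(i W / hbar) conjugates -i hbar d/dq^{A i} into
   -i hbar d/dq^{A i} - dW/dq^{A i}, and i hbar d/dt into i hbar d/dt + dW/dt.  Hence, for
   psi = psi_sharp(q_sharp) exp(i W / hbar), every operator built from momenta p_{A i} with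
   A < N - 1 acts on psi in the shifted representation exactly as it acts on psi_sharp in
   the standard one, followed by the phase; induction over the operator expression turns
   this into the equivalence of the Schroedinger equations and of the constraints
   gamma_sharp_a.  The remaining constraints gamma_i say that psi exp(-i W / hbar) has zero
   derivative in every q^{N-1, i}, i.e. that it is a function of q_sharp alone. *)

lemma cupd_apply_same [simp]: "cupd q I i s I i = s"
  by (simp add: cupd_def)

lemma cupd_self [simp]: "cupd q I i (q I i) = q"
  by (simp add: cupd_def)

lemma cupd_cupd [simp]: "cupd (cupd q I i s) I i s' = cupd q I i s'"
  by (simp add: cupd_def)

lemma cupd_in_cfgs: "q \<in> cfgs n d \<Longrightarrow> I < n \<Longrightarrow> i < d \<Longrightarrow> cupd q I i s \<in> cfgs n d"
  by (auto simp: cupd_def cfgs_def)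

lemma cfgs_pred_subset: "cfgs (N - 1) d \<subseteq> cfgs N d"
  by (auto simp: cfgs_def)

lemma sharp_in_cfgs: "sharp N d q \<in> cfgs (N - 1) d"
  by (auto simp: sharp_def cfgs_def)

lemma sharp_eq_self: "q \<in> cfgs (N - 1) d \<Longrightarrow> sharp N d q = q"
  by (auto simp: sharp_def cfgs_def fun_eq_iff)

lemma sharp_apply: "A < N - 1 \<Longrightarrow> i < d \<Longrightarrow> sharp N d q A i = q A i"
  by (simp add: sharp_def)

lemma sharp_cupd: "A < N - 1 \<Longrightarrow> i < d \<Longrightarrow> sharp N d (cupd q A i s) = cupd (sharp N d q) A i s"
  by (auto simp: sharp_def cupd_def fun_eq_iff)

lemma sharp_cupd_last: "sharp N d (cupd q (N - 1) i s) = sharp N d q"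
  by (auto simp: sharp_def cupd_def fun_eq_iff)

lemma has_pd_unique:
  "has_pd Q F I i G \<Longrightarrow> has_pd Q F I i G' \<Longrightarrow> q \<in> Q \<Longrightarrow> G q t = G' q t"
  unfolding has_pd_def by (metis vector_derivative_unique_at)

lemma has_pd_pd: "has_pd Q F I i G \<Longrightarrow> has_pd Q F I i (pd F I i)"
  unfolding has_pd_def pd_def by (metis vector_derivative_at)

lemma has_pt_pt: "has_pt Q F G \<Longrightarrow> has_pt Q F (pt F)"
  unfolding has_pt_def pt_def by (metis vector_derivative_at)

lemma has_pd_cong:
  assumes "has_pd Q F I i G" "Q' \<subseteq> Q" "\<And>q s. q \<in> Q' \<Longrightarrow> cupd q I i s \<in> Q'"
    and "\<And>q t. q \<in> Q' \<Longrightarrow> F' q t = F q t" "\<And>q t. q \<in> Q' \<Longrightarrow> G' q t = G q t"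
  shows "has_pd Q' F' I i G'"
  unfolding has_pd_def
proof (intro ballI allI)
  fix q t assume q: "q \<in> Q'"
  have "(\<lambda>s. F' (cupd q I i s) t) = (\<lambda>s. F (cupd q I i s) t)"
    using assms(3,4) q by auto
  then show "((\<lambda>s. F' (cupd q I i s) t) has_vector_derivative G' q t) (at (q I i))"
    using assms q unfolding has_pd_def by auto
qed

lemma has_pt_cong:
  assumes "has_pt Q F G" "Q' \<subseteq> Q"
    and "\<And>q t. q \<in> Q' \<Longrightarrow> F' q t = F q t" "\<And>q t. q \<in> Q' \<Longrightarrow> G' q t = G q t"
  shows "has_pt Q' F' G'"
proof -
  have "F' q = F q" if "q \<in> Q'" for q
    using assms(3) that by auto
  then show ?thesis
    using assms unfolding has_pt_def by auto
qed

lemma has_pd_mult: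
  fixes F G :: "cfg \<Rightarrow> real \<Rightarrow> 'a::real_normed_algebra"
  assumes "has_pd Q F I i F'" "has_pd Q G I i G'"
  shows "has_pd Q (\<lambda>q t. F q t * G q t) I i (\<lambda>q t. F q t * G' q t + F' q t * G q t)"
  unfolding has_pd_def
proof (intro ballI allI)
  fix q t assume "q \<in> Q"
  then have "((\<lambda>s. F (cupd q I i s) t) has_vector_derivative F' q t) (at (q I i))"
    and "((\<lambda>s. G (cupd q I i s) t) has_vector_derivative G' q t) (at (q I i))"
    using assms unfolding has_pd_def by auto
  from has_vector_derivative_mult[OF this]
  show "((\<lambda>s. F (cupd q I i s) t * G (cupd q I i s) t) has_vector_derivative
      F q t * G' q t + F' q t * G q t) (at (q I i))"
    by simp
qed

lemma has_pt_mult: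
  fixes F G :: "cfg \<Rightarrow> real \<Rightarrow> 'a::real_normed_algebra"
  assumes "has_pt Q F F'" "has_pt Q G G'"
  shows "has_pt Q (\<lambda>q t. F q t * G q t) (\<lambda>q t. F q t * G' q t + F' q t * G q t)"
  using assms unfolding has_pt_def by (auto intro: has_vector_derivative_mult)

lemma has_pd_sharp:
  assumes "A < N - 1" "i < d" "has_pd (cfgs (N - 1) d) F A i G"
  shows "has_pd (cfgs N d) (\<lambda>q. F (sharp N d q)) A i (\<lambda>q. G (sharp N d q))"
  unfolding has_pd_def
proof (intro ballI allI)
  fix q t
  have "((\<lambda>s. F (cupd (sharp N d q) A i s) t) has_vector_derivative G (sharp N d q) t)
      (at (sharp N d q A i))"
    using assms(3) sharp_in_cfgs unfolding has_pd_def by blast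
  then show "((\<lambda>s. F (sharp N d (cupd q A i s)) t) has_vector_derivative G (sharp N d q) t)
      (at (q A i))"
    using assms(1,2) by (simp add: sharp_apply sharp_cupd)
qed

lemma has_pd_sharp_last: "has_pd Q (\<lambda>q. F (sharp N d q)) (N - 1) i (\<lambda>_ _. 0)"
  unfolding has_pd_def sharp_cupd_last by simp

lemma has_pt_sharp:
  "has_pt (cfgs (N - 1) d) F G \<Longrightarrow> has_pt (cfgs N d) (\<lambda>q. F (sharp N d q)) (\<lambda>q. G (sharp N d q))"
  using sharp_in_cfgs unfolding has_pt_def by blast

lemma has_pd_zero_imp_constant:
  assumes "has_pd Q F I i (\<lambda>_ _. 0)" "q \<in> Q" "\<And>s. cupd q I i s \<in> Q"
  shows "F (cupd q I i s) t = F q t"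
proof -
  have "((\<lambda>s. F (cupd q I i s) t) has_vector_derivative 0) (at x within UNIV)" for x
  proof -
    have "((\<lambda>s. F (cupd (cupd q I i x) I i s) t) has_vector_derivative 0) (at (cupd q I i x I i))"
      using assms(1,3) unfolding has_pd_def by blast
    then show ?thesis by simp
  qed
  then obtain c where c: "\<And>x. F (cupd q I i x) t = c"
    by (rule has_vector_derivative_zero_constant[OF convex_UNIV]) blast
  from c[of s] c[of "q I i"] show ?thesis by simp
qed

lemma has_pd_zero_last_block:
  assumes "0 < N" "\<forall>i<d. has_pd (cfgs N d) F (N - 1) i (\<lambda>_ _. 0)" "q \<in> cfgs N d"
  shows "F (sharp N d q) t = F q t"
proof -
  define clear where "clear k = (\<lambda>I j. if I = N - 1 \<and> j < k then 0 else q I j)" for k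
  have "clear k \<in> cfgs N d \<and> F (clear k) t = F q t" if "k \<le> d" for k
    using that
  proof (induction k)
    case 0
    have "clear 0 = q" by (simp add: clear_def)
    then show ?case using assms(3) by simp
  next
    case (Suc k)
    then have IH: "clear k \<in> cfgs N d" "F (clear k) t = F q t" and k: "k < d"
      by auto
    have "clear (Suc k) = cupd (clear k) (N - 1) k 0"
      by (auto simp: clear_def cupd_def fun_eq_iff)
    moreover have "F (cupd (clear k) (N - 1) k 0) t = F (clear k) t"
      using assms(1,2) k cupd_in_cfgs[OF IH(1) _ k]
      by (intro has_pd_zero_imp_constant[OF _ IH(1)]) auto
    ultimately show ?case
      using cupd_in_cfgs[OF IH(1) _ k] assms(1) IH(2) by simp
  qed
  moreover have "clear d = sharp N d q"
    using assms(1,3) by (auto simp: clear_def sharp_def cfgs_def fun_eq_iff)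
  ultimately show ?thesis by (metis order_refl)
qed

lemma has_pd_exp:
  fixes F :: "cfg \<Rightarrow> real \<Rightarrow> real" and c :: complex
  assumes "has_pd Q F I i G"
  shows "has_pd Q (\<lambda>q t. exp (c * of_real (F q t))) I i
           (\<lambda>q t. c * of_real (G q t) * exp (c * of_real (F q t)))"
  unfolding has_pd_def
proof (intro ballI allI)
  fix q t assume "q \<in> Q"
  then have "((\<lambda>s. c * of_real (F (cupd q I i s) t)) has_vector_derivative c * of_real (G q t))
      (at (q I i))"
    using assms unfolding has_pd_def
    by (intro has_vector_derivative_mult_right has_vector_derivative_of_real)
       (auto simp: has_real_derivative_iff_has_vector_derivative)
  from field_vector_diff_chain_at[OF this DERIV_exp]
  show "((\<lambda>s. exp (c * of_real (F (cupd q I i s) t))) has_vector_derivative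
      c * of_real (G q t) * exp (c * of_real (F q t))) (at (q I i))"
    by (simp add: o_def mult.commute)
qed

lemma has_pt_exp:
  fixes F :: "cfg \<Rightarrow> real \<Rightarrow> real" and c :: complex
  assumes "has_pt Q F G"
  shows "has_pt Q (\<lambda>q t. exp (c * of_real (F q t))) (\<lambda>q t. c * of_real (G q t) * exp (c * of_real (F q t)))"
  unfolding has_pt_def
proof (intro ballI allI)
  fix q t assume "q \<in> Q"
  then have "((\<lambda>s. c * of_real (F q s)) has_vector_derivative c * of_real (G q t)) (at t)"
    using assms unfolding has_pt_def
    by (intro has_vector_derivative_mult_right has_vector_derivative_of_real)
       (auto simp: has_real_derivative_iff_has_vector_derivative)
  from field_vector_diff_chain_at[OF this DERIV_exp]
  show "((\<lambda>s. exp (c * of_real (F q s))) has_vector_derivative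
      c * of_real (G q t) * exp (c * of_real (F q t))) (at t)"
    by (simp add: o_def mult.commute)
qed

lemma mom_shift_unique:
  "mom_shift hbar Q W A i \<psi> \<phi> \<Longrightarrow> mom_shift hbar Q W A i \<psi> \<phi>' \<Longrightarrow> q \<in> Q \<Longrightarrow> \<phi> q t = \<phi>' q t"
  unfolding mom_shift_def by (metis has_pd_unique)

lemma op_app_simulation:
  assumes "op_app mom proj e \<psi> \<phi>" "qop_wf n d e" "R \<psi> \<psi>'"
    and mul: "\<And>c \<psi> \<psi>'. R \<psi> \<psi>' \<Longrightarrow> R (\<lambda>q t. c (proj q) t * \<psi> q t) (\<lambda>q t. c (proj' q) t * \<psi>' q t)"
    and add: "\<And>\<psi>1 \<psi>1' \<psi>2 \<psi>2'. R \<psi>1 \<psi>1' \<Longrightarrow> R \<psi>2 \<psi>2' \<Longrightarrow>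
                R (\<lambda>q t. \<psi>1 q t + \<psi>2 q t) (\<lambda>q t. \<psi>1' q t + \<psi>2' q t)"
    and mom: "\<And>A i \<psi> \<psi>' \<phi>. A < n \<Longrightarrow> i < d \<Longrightarrow> mom A i \<psi> \<phi> \<Longrightarrow> R \<psi> \<psi>' \<Longrightarrow>
                \<exists>\<phi>'. mom' A i \<psi>' \<phi>' \<and> R \<phi> \<phi>'"
  shows "\<exists>\<phi>'. op_app mom' proj' e \<psi>' \<phi>' \<and> R \<phi> \<phi>'"
  using assms(1-3)
proof (induction arbitrary: \<psi>' rule: op_app.induct)
  case (1 c \<psi>)
  then show ?case by (blast intro: op_app.intros mul)
next
  case (2 A i \<psi> \<phi>)
  then obtain \<phi>' where "mom' A i \<psi>' \<phi>'" "R \<phi> \<phi>'"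
    using mom[of A i \<psi> \<phi> \<psi>'] by auto
  then show ?case by (blast intro: op_app.intros)
next
  case (3 e2 \<psi> \<psi>m e1 \<phi>)
  then obtain \<psi>m' where "op_app mom' proj' e2 \<psi>' \<psi>m'" "R \<psi>m \<psi>m'"
    by auto
  moreover from this(2) 3 obtain \<phi>' where "op_app mom' proj' e1 \<psi>m' \<phi>'" "R \<phi> \<phi>'"
    by auto
  ultimately show ?case by (blast intro: op_app.intros)
next
  case (4 e1 \<psi> \<phi>1 e2 \<phi>2)
  then obtain \<phi>1' \<phi>2' where "op_app mom' proj' e1 \<psi>' \<phi>1'" "R \<phi>1 \<phi>1'"
    and "op_app mom' proj' e2 \<psi>' \<phi>2'" "R \<phi>2 \<phi>2'"
    by (meson qop_wf.simps(4))
  then show ?case by (blast intro: op_app.intros add)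
qed

locale gauge_equivalence =
  fixes N d :: nat and hbar :: real and W :: "cfg \<Rightarrow> real \<Rightarrow> real"
  assumes N_pos: "0 < N" and hbar_nonzero: "hbar \<noteq> 0"
    and W_has_pd: "\<And>I i. I < N \<Longrightarrow> i < d \<Longrightarrow> \<exists>G. has_pd (cfgs N d) W I i G"
    and W_has_pt: "\<exists>G. has_pt (cfgs N d) W G"
begin

abbreviation "Q \<equiv> cfgs N d"
abbreviation "Qs \<equiv> cfgs (N - 1) d"

definition phase :: "cfg \<Rightarrow> real \<Rightarrow> complex" where
  "phase q t = exp (\<i> * complex_of_real (W q t) / complex_of_real hbar)"

definition gauged :: "wfun \<Rightarrow> wfun \<Rightarrow> bool" where
  "gauged \<psi>s \<psi> \<longleftrightarrow> (\<forall>q\<in>Q. \<forall>t. \<psi> q t = \<psi>s (sharp N d q) t * phase q t)"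

lemma phase_nonzero [simp]: "phase q t \<noteq> 0"
  by (simp add: phase_def)

lemma phase_exp: "phase q t = exp (c * complex_of_real (W q t))" if "c = \<i> / complex_of_real hbar"
  using that by (simp add: phase_def)

lemma inverse_phase_exp: "inverse (phase q t) = exp (c * complex_of_real (W q t))"
  if "c = - \<i> / complex_of_real hbar"
  using that by (simp add: phase_def flip: exp_minus)

lemma has_pd_phase:
  assumes "I < N" "i < d"
  shows "has_pd Q phase I i (\<lambda>q t. \<i> * of_real (pd W I i q t) / of_real hbar * phase q t)"
  using has_pd_exp[OF has_pd_pd, of Q W I i _ "\<i> / of_real hbar"] W_has_pd[OF assms]
  by (auto simp: phase_exp[OF refl, abs_def])

lemma has_pd_inverse_phase:
  assumes "I < N" "i < d"
  shows "has_pd Q (\<lambda>q t. inverse (phase q t)) I i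
           (\<lambda>q t. - \<i> * of_real (pd W I i q t) / of_real hbar * inverse (phase q t))"
  using has_pd_exp[OF has_pd_pd, of Q W I i _ "- \<i> / of_real hbar"] W_has_pd[OF assms]
  by (auto simp: inverse_phase_exp[OF refl])

lemma has_pt_phase: "has_pt Q phase (\<lambda>q t. \<i> * of_real (pt W q t) / of_real hbar * phase q t)"
  using has_pt_exp[OF has_pt_pt, of Q W _ "\<i> / of_real hbar"] W_has_pt
  by (auto simp: phase_exp[OF refl, abs_def])

lemma has_pt_inverse_phase:
  "has_pt Q (\<lambda>q t. inverse (phase q t)) (\<lambda>q t. - \<i> * of_real (pt W q t) / of_real hbar * inverse (phase q t))"
  using has_pt_exp[OF has_pt_pt, of Q W _ "- \<i> / of_real hbar"] W_has_pt
  by (auto simp: inverse_phase_exp[OF refl])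

lemma gauged_on_Qs: "gauged \<psi>s \<psi> \<Longrightarrow> q \<in> Qs \<Longrightarrow> \<psi>s q t = \<psi> q t * inverse (phase q t)"
  using cfgs_pred_subset by (fastforce simp: gauged_def sharp_eq_self)

lemma mom_std_imp_mom_shift:
  assumes "A < N - 1" "i < d" "mom_std hbar Qs A i \<psi>s \<phi>s" "gauged \<psi>s \<psi>"
  shows "mom_shift hbar Q W A i \<psi> (\<lambda>q t. \<phi>s (sharp N d q) t * phase q t)"
proof -
  obtain G where G: "has_pd Qs \<psi>s A i G" and \<phi>s: "\<And>q t. q \<in> Qs \<Longrightarrow> \<phi>s q t = - \<i> * hbar * G q t"
    using assms(3) unfolding mom_std_def by blast
  have "has_pd Q (\<lambda>q t. \<psi>s (sharp N d q) t * phase q t) A i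
     (\<lambda>q t. \<psi>s (sharp N d q) t * (\<i> * of_real (pd W A i q t) / of_real hbar * phase q t)
            + G (sharp N d q) t * phase q t)"
    using assms(1,2) by (intro has_pd_mult has_pd_sharp has_pd_phase G) auto
  then have "has_pd Q \<psi> A i
     (\<lambda>q t. \<psi>s (sharp N d q) t * (\<i> * of_real (pd W A i q t) / of_real hbar * phase q t)
            + G (sharp N d q) t * phase q t)"
    by (rule has_pd_cong) (use assms cupd_in_cfgs in \<open>auto simp: gauged_def\<close>)
  then show ?thesis
    unfolding mom_shift_def using assms(4) \<phi>s[OF sharp_in_cfgs] hbar_nonzero
    by (auto simp: gauged_def field_simps)
qed

(* The derivative of psi_sharp comes from that of psi exp(-i W / hbar); that the result is
   the gauge image of phi then follows from the forward direction and uniqueness. *)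
lemma mom_shift_imp_mom_std:
  assumes "A < N - 1" "i < d" "mom_shift hbar Q W A i \<psi> \<phi>" "gauged \<psi>s \<psi>"
  shows "\<exists>\<phi>s. mom_std hbar Qs A i \<psi>s \<phi>s \<and> gauged \<phi>s \<phi>"
proof -
  obtain G where "has_pd Q \<psi> A i G"
    using assms(3) unfolding mom_shift_def by blast
  then have "has_pd Q (\<lambda>q t. \<psi> q t * inverse (phase q t)) A i
     (\<lambda>q t. \<psi> q t * (- \<i> * of_real (pd W A i q t) / of_real hbar * inverse (phase q t))
            + G q t * inverse (phase q t))"
    using assms(1,2) by (intro has_pd_mult has_pd_inverse_phase) auto
  then have "has_pd Qs \<psi>s A i
     (\<lambda>q t. \<psi> q t * (- \<i> * of_real (pd W A i q t) / of_real hbar * inverse (phase q t))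
            + G q t * inverse (phase q t))"
    by (rule has_pd_cong) (use assms cfgs_pred_subset cupd_in_cfgs gauged_on_Qs in auto)
  then have std: "mom_std hbar Qs A i \<psi>s (\<lambda>q t. - \<i> * hbar *
     (\<psi> q t * (- \<i> * of_real (pd W A i q t) / of_real hbar * inverse (phase q t))
            + G q t * inverse (phase q t)))" (is "mom_std _ _ _ _ _ ?\<phi>s")
    unfolding mom_std_def by blast
  have "gauged ?\<phi>s \<phi>"
    unfolding gauged_def
    using mom_shift_unique[OF assms(3) mom_std_imp_mom_shift[OF assms(1,2) std assms(4)]] by blast
  with std show ?thesis by blast
qed

lemma gauged_gauge: "gauged \<psi>s (\<lambda>q t. \<psi>s (sharp N d q) t * phase q t)"
  by (simp add: gauged_def)

lemma op_app_std_imp_shift: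
  assumes "op_app (mom_std hbar Qs) id e \<psi>s \<phi>s" "qop_wf (N - 1) d e" "gauged \<psi>s \<psi>"
  shows "\<exists>\<phi>. op_app (mom_shift hbar Q W) (sharp N d) e \<psi> \<phi> \<and> gauged \<phi>s \<phi>"
proof (rule op_app_simulation[where R = gauged, OF assms])
  show "gauged (\<lambda>q t. c (id q) t * \<psi>1 q t) (\<lambda>q t. c (sharp N d q) t * \<psi>2 q t)"
    if "gauged \<psi>1 \<psi>2" for c \<psi>1 \<psi>2
    using that by (simp add: gauged_def)
  show "gauged (\<lambda>q t. \<psi>1 q t + \<psi>2 q t) (\<lambda>q t. \<psi>1' q t + \<psi>2' q t)"
    if "gauged \<psi>1 \<psi>1'" "gauged \<psi>2 \<psi>2'" for \<psi>1 \<psi>1' \<psi>2 \<psi>2'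
    using that by (simp add: gauged_def distrib_right)
  show "\<exists>\<phi>'. mom_shift hbar Q W A i \<psi>' \<phi>' \<and> gauged \<phi>s \<phi>'"
    if "A < N - 1" "i < d" "mom_std hbar Qs A i \<psi>s \<phi>s" "gauged \<psi>s \<psi>'" for A i \<psi>s \<psi>' \<phi>s
    using mom_std_imp_mom_shift[OF that] gauged_gauge by blast
qed

lemma op_app_shift_imp_std:
  assumes "op_app (mom_shift hbar Q W) (sharp N d) e \<psi> \<phi>" "qop_wf (N - 1) d e" "gauged \<psi>s \<psi>"
  shows "\<exists>\<phi>s. op_app (mom_std hbar Qs) id e \<psi>s \<phi>s \<and> gauged \<phi>s \<phi>"
proof (rule op_app_simulation[where R = "\<lambda>\<psi> \<psi>s. gauged \<psi>s \<psi>", OF assms])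
  show "gauged (\<lambda>q t. c (id q) t * \<psi>2 q t) (\<lambda>q t. c (sharp N d q) t * \<psi>1 q t)"
    if "gauged \<psi>2 \<psi>1" for c \<psi>1 \<psi>2
    using that by (simp add: gauged_def)
  show "gauged (\<lambda>q t. \<psi>1' q t + \<psi>2' q t) (\<lambda>q t. \<psi>1 q t + \<psi>2 q t)"
    if "gauged \<psi>1' \<psi>1" "gauged \<psi>2' \<psi>2" for \<psi>1 \<psi>1' \<psi>2 \<psi>2'
    using that by (simp add: gauged_def distrib_right)
  show "\<exists>\<phi>s. mom_std hbar Qs A i \<psi>s \<phi>s \<and> gauged \<phi>s \<phi>"
    if "A < N - 1" "i < d" "mom_shift hbar Q W A i \<psi> \<phi>" "gauged \<psi>s \<psi>" for A i \<psi> \<psi>s \<phi>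
    using mom_shift_imp_mom_std[OF that] .
qed

lemma gauged_imp_last_block_constraint:
  assumes "gauged \<psi>s \<psi>" "i < d"
  shows "mom_shift hbar Q W (N - 1) i \<psi> (\<lambda>_ _. 0)"
proof -
  have "has_pd Q (\<lambda>q t. \<psi>s (sharp N d q) t * phase q t) (N - 1) i
     (\<lambda>q t. \<psi>s (sharp N d q) t * (\<i> * of_real (pd W (N - 1) i q t) / of_real hbar * phase q t)
            + 0 * phase q t)"
    using N_pos assms(2) by (intro has_pd_mult has_pd_sharp_last has_pd_phase) auto
  then have "has_pd Q \<psi> (N - 1) i
     (\<lambda>q t. \<psi>s (sharp N d q) t * (\<i> * of_real (pd W (N - 1) i q t) / of_real hbar * phase q t))"
    by (rule has_pd_cong) (use assms N_pos cupd_in_cfgs in \<open>auto simp: gauged_def\<close>)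
  then show ?thesis
    unfolding mom_shift_def using assms(1) hbar_nonzero
    by (auto simp: gauged_def field_simps)
qed

lemma last_block_constraint_imp_gauged:
  assumes "\<forall>i<d. mom_shift hbar Q W (N - 1) i \<psi> (\<lambda>_ _. 0)"
  shows "gauged (\<lambda>q t. \<psi> q t * inverse (phase q t)) \<psi>"
proof -
  have "has_pd Q (\<lambda>q t. \<psi> q t * inverse (phase q t)) (N - 1) i (\<lambda>_ _. 0)" if i: "i < d" for i
  proof -
    obtain G where G: "has_pd Q \<psi> (N - 1) i G"
      and eq: "\<And>q t. q \<in> Q \<Longrightarrow> 0 = - \<i> * hbar * G q t - pd W (N - 1) i q t * \<psi> q t"
      using assms i unfolding mom_shift_def by blast
    have "has_pd Q (\<lambda>q t. \<psi> q t * inverse (phase q t)) (N - 1) i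
       (\<lambda>q t. \<psi> q t * (- \<i> * of_real (pd W (N - 1) i q t) / of_real hbar * inverse (phase q t))
              + G q t * inverse (phase q t))"
      using N_pos i by (intro has_pd_mult G has_pd_inverse_phase) auto
    then show ?thesis
    proof (rule has_pd_cong)
      fix q t assume "q \<in> Q"
      from eq[OF this, of t] have "G q t = \<i> * pd W (N - 1) i q t * \<psi> q t / hbar"
        using hbar_nonzero by (simp add: field_simps)
      then show "0 = \<psi> q t * (- \<i> * of_real (pd W (N - 1) i q t) / of_real hbar * inverse (phase q t))
              + G q t * inverse (phase q t)"
        by simp
    qed (use N_pos i cupd_in_cfgs in auto)
  qed
  then have "\<psi> (sharp N d q) t * inverse (phase (sharp N d q) t) = \<psi> q t * inverse (phase q t)"
    if "q \<in> Q" for q t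
    using has_pd_zero_last_block[OF N_pos _ that] by blast
  then show ?thesis
    by (simp add: gauged_def)
qed

lemma time_derivative_gauged:
  fixes \<psi>s \<psi> \<phi>s \<phi> :: wfun
  assumes "gauged \<psi>s \<psi>" "gauged \<phi>s \<phi>"
  shows "(\<exists>Gt. has_pt Q \<psi> Gt \<and> (\<forall>q\<in>Q. \<forall>t. \<i> * hbar * Gt q t = \<phi> q t - pt W q t * \<psi> q t))
     \<longleftrightarrow> (\<exists>Gts. has_pt Qs \<psi>s Gts \<and> (\<forall>q\<in>Qs. \<forall>t. \<i> * hbar * Gts q t = \<phi>s q t))"
proof
  assume "\<exists>Gt. has_pt Q \<psi> Gt \<and> (\<forall>q\<in>Q. \<forall>t. \<i> * hbar * Gt q t = \<phi> q t - pt W q t * \<psi> q t)"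
  then obtain Gt where Gt: "has_pt Q \<psi> Gt"
    and eq: "\<And>q t. q \<in> Q \<Longrightarrow> \<i> * hbar * Gt q t = \<phi> q t - pt W q t * \<psi> q t"
    by blast
  define Gts where "Gts q t = \<psi> q t * (- \<i> * of_real (pt W q t) / of_real hbar * inverse (phase q t))
      + Gt q t * inverse (phase q t)" for q t
  have "has_pt Q (\<lambda>q t. \<psi> q t * inverse (phase q t)) Gts"
    unfolding Gts_def by (intro has_pt_mult Gt has_pt_inverse_phase)
  then have "has_pt Qs \<psi>s Gts"
    by (rule has_pt_cong) (use assms cfgs_pred_subset gauged_on_Qs in auto)
  moreover have "\<i> * hbar * Gts q t = \<phi>s q t" if "q \<in> Qs" for q t
  proof -
    have "\<i> * hbar * Gts q t = (pt W q t * \<psi> q t + \<i> * hbar * Gt q t) * inverse (phase q t)"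
      unfolding Gts_def using hbar_nonzero by (simp add: field_simps)
    also have "\<dots> = \<phi>s q t"
      using eq[of q t] gauged_on_Qs[OF assms(2) that] cfgs_pred_subset that by force
    finally show ?thesis .
  qed
  ultimately show "\<exists>Gts. has_pt Qs \<psi>s Gts \<and> (\<forall>q\<in>Qs. \<forall>t. \<i> * hbar * Gts q t = \<phi>s q t)"
    by blast
next
  assume "\<exists>Gts. has_pt Qs \<psi>s Gts \<and> (\<forall>q\<in>Qs. \<forall>t. \<i> * hbar * Gts q t = \<phi>s q t)"
  then obtain Gts where Gts: "has_pt Qs \<psi>s Gts"
    and eq: "\<And>q t. q \<in> Qs \<Longrightarrow> \<i> * hbar * Gts q t = \<phi>s q t"
    by blast
  define Gt where "Gt q t = \<psi>s (sharp N d q) t * (\<i> * of_real (pt W q t) / of_real hbar * phase q t)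
      + Gts (sharp N d q) t * phase q t" for q t
  have "has_pt Q (\<lambda>q t. \<psi>s (sharp N d q) t * phase q t) Gt"
    unfolding Gt_def by (intro has_pt_mult has_pt_sharp has_pt_phase Gts)
  then have "has_pt Q \<psi> Gt"
    by (rule has_pt_cong) (use assms(1) in \<open>auto simp: gauged_def\<close>)
  moreover have "\<i> * hbar * Gt q t = \<phi> q t - pt W q t * \<psi> q t" if "q \<in> Q" for q t
  proof -
    have "\<i> * hbar * Gt q t = (\<i> * hbar * Gts (sharp N d q) t - pt W q t * \<psi>s (sharp N d q) t) * phase q t"
      unfolding Gt_def using hbar_nonzero by (simp add: field_simps)
    also have "\<dots> = \<phi> q t - pt W q t * \<psi> q t"
      using eq[OF sharp_in_cfgs] assms that by (simp add: gauged_def algebra_simps)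
    finally show ?thesis .
  qed
  ultimately show "\<exists>Gt. has_pt Q \<psi> Gt \<and> (\<forall>q\<in>Q. \<forall>t. \<i> * hbar * Gt q t = \<phi> q t - pt W q t * \<psi> q t)"
    by blast
qed

lemma schroedinger_gauged:
  fixes \<psi>s \<psi> :: wfun
  assumes "qop_wf (N - 1) d H" "gauged \<psi>s \<psi>"
  shows "(\<exists>Gt \<phi>. has_pt Q \<psi> Gt \<and> op_app (mom_shift hbar Q W) (sharp N d) H \<psi> \<phi> \<and>
            (\<forall>q\<in>Q. \<forall>t. \<i> * hbar * Gt q t = \<phi> q t - pt W q t * \<psi> q t))
     \<longleftrightarrow> (\<exists>Gts \<phi>s. has_pt Qs \<psi>s Gts \<and> op_app (mom_std hbar Qs) id H \<psi>s \<phi>s \<and>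
            (\<forall>q\<in>Qs. \<forall>t. \<i> * hbar * Gts q t = \<phi>s q t))"
proof
  assume "\<exists>Gt \<phi>. has_pt Q \<psi> Gt \<and> op_app (mom_shift hbar Q W) (sharp N d) H \<psi> \<phi> \<and>
            (\<forall>q\<in>Q. \<forall>t. \<i> * hbar * Gt q t = \<phi> q t - pt W q t * \<psi> q t)"
  then obtain Gt \<phi> where "has_pt Q \<psi> Gt" "op_app (mom_shift hbar Q W) (sharp N d) H \<psi> \<phi>"
    "\<forall>q\<in>Q. \<forall>t. \<i> * hbar * Gt q t = \<phi> q t - pt W q t * \<psi> q t"
    by blast
  moreover obtain \<phi>s where "op_app (mom_std hbar Qs) id H \<psi>s \<phi>s" "gauged \<phi>s \<phi>"
    using op_app_shift_imp_std[OF calculation(2) assms] by blast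
  ultimately show "\<exists>Gts \<phi>s. has_pt Qs \<psi>s Gts \<and> op_app (mom_std hbar Qs) id H \<psi>s \<phi>s \<and>
            (\<forall>q\<in>Qs. \<forall>t. \<i> * hbar * Gts q t = \<phi>s q t)"
    using time_derivative_gauged[OF assms(2)] by blast
next
  assume "\<exists>Gts \<phi>s. has_pt Qs \<psi>s Gts \<and> op_app (mom_std hbar Qs) id H \<psi>s \<phi>s \<and>
            (\<forall>q\<in>Qs. \<forall>t. \<i> * hbar * Gts q t = \<phi>s q t)"
  then obtain Gts \<phi>s where "has_pt Qs \<psi>s Gts" "op_app (mom_std hbar Qs) id H \<psi>s \<phi>s"
    "\<forall>q\<in>Qs. \<forall>t. \<i> * hbar * Gts q t = \<phi>s q t"
    by blast
  moreover obtain \<phi> where "op_app (mom_shift hbar Q W) (sharp N d) H \<psi> \<phi>" "gauged \<phi>s \<phi>"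
    using op_app_std_imp_shift[OF calculation(2) assms] by blast
  ultimately show "\<exists>Gt \<phi>. has_pt Q \<psi> Gt \<and> op_app (mom_shift hbar Q W) (sharp N d) H \<psi> \<phi> \<and>
            (\<forall>q\<in>Q. \<forall>t. \<i> * hbar * Gt q t = \<phi> q t - pt W q t * \<psi> q t)"
    using time_derivative_gauged[OF assms(2)] by blast
qed

lemma constraint_gauged:
  assumes "qop_wf (N - 1) d e" "gauged \<psi>s \<psi>"
  shows "(\<exists>\<phi>. op_app (mom_shift hbar Q W) (sharp N d) e \<psi> \<phi> \<and> (\<forall>q\<in>Q. \<forall>t. \<phi> q t = 0))
     \<longleftrightarrow> (\<exists>\<phi>s. op_app (mom_std hbar Qs) id e \<psi>s \<phi>s \<and> (\<forall>q\<in>Qs. \<forall>t. \<phi>s q t = 0))"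
proof
  assume "\<exists>\<phi>. op_app (mom_shift hbar Q W) (sharp N d) e \<psi> \<phi> \<and> (\<forall>q\<in>Q. \<forall>t. \<phi> q t = 0)"
  then obtain \<phi> where \<phi>: "op_app (mom_shift hbar Q W) (sharp N d) e \<psi> \<phi>" "\<forall>q\<in>Q. \<forall>t. \<phi> q t = 0"
    by blast
  moreover obtain \<phi>s where "op_app (mom_std hbar Qs) id e \<psi>s \<phi>s" "gauged \<phi>s \<phi>"
    using op_app_shift_imp_std[OF \<phi>(1) assms] by blast
  ultimately show "\<exists>\<phi>s. op_app (mom_std hbar Qs) id e \<psi>s \<phi>s \<and> (\<forall>q\<in>Qs. \<forall>t. \<phi>s q t = 0)"
    using gauged_on_Qs cfgs_pred_subset by fastforce
next
  assume "\<exists>\<phi>s. op_app (mom_std hbar Qs) id e \<psi>s \<phi>s \<and> (\<forall>q\<in>Qs. \<forall>t. \<phi>s q t = 0)"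
  then obtain \<phi>s where \<phi>s: "op_app (mom_std hbar Qs) id e \<psi>s \<phi>s" "\<forall>q\<in>Qs. \<forall>t. \<phi>s q t = 0"
    by blast
  moreover obtain \<phi> where "op_app (mom_shift hbar Q W) (sharp N d) e \<psi> \<phi>" "gauged \<phi>s \<phi>"
    using op_app_std_imp_shift[OF \<phi>s(1) assms] by blast
  ultimately show "\<exists>\<phi>. op_app (mom_shift hbar Q W) (sharp N d) e \<psi> \<phi> \<and> (\<forall>q\<in>Q. \<forall>t. \<phi> q t = 0)"
    using sharp_in_cfgs by (auto simp: gauged_def)
qed

lemma quantum_L_iff_quantum_Lsharp:
  assumes "qop_wf (N - 1) d H" "\<forall>a. qop_wf (N - 1) d (\<gamma> a)" "gauged \<psi>s \<psi>"
  shows "quantum_L N d hbar W H \<gamma> \<psi> \<longleftrightarrow> quantum_Lsharp N d hbar H \<gamma> \<psi>s"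
  using schroedinger_gauged[OF assms(1,3)] constraint_gauged[OF _ assms(3)] assms(2)
    gauged_imp_last_block_constraint[OF assms(3)]
  unfolding quantum_L_def quantum_Lsharp_def Let_def by auto

end

theorem proposition1:
  fixes N d :: nat and hbar :: real and W :: "cfg \<Rightarrow> real \<Rightarrow> real"
    and H :: qop and \<gamma> :: "'a \<Rightarrow> qop" and \<psi> :: wfun
  assumes "N \<ge> 2" and "d \<ge> 1" and "hbar > 0"
    and "smooth_cfg N d W"
    and "qop_wf (N - 1) d H" and "\<forall>a. qop_wf (N - 1) d (\<gamma> a)"
  shows "quantum_L N d hbar W H \<gamma> \<psi> \<longleftrightarrow>
         (\<exists>\<psi>s. quantum_Lsharp N d hbar H \<gamma> \<psi>s \<and>
            (\<forall>q\<in>cfgs N d. \<forall>t. \<psi> q t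
               = \<psi>s (sharp N d q) t * exp (\<i> * complex_of_real (W q t) / complex_of_real hbar)))"
proof -
  interpret gauge_equivalence N d hbar W
    using assms(1,3) smooth_cfg.cases[OF assms(4)] by unfold_locales auto
  have "quantum_L N d hbar W H \<gamma> \<psi> \<longleftrightarrow> (\<exists>\<psi>s. quantum_Lsharp N d hbar H \<gamma> \<psi>s \<and> gauged \<psi>s \<psi>)"
  proof
    assume L: "quantum_L N d hbar W H \<gamma> \<psi>"
    then have "gauged (\<lambda>q t. \<psi> q t * inverse (phase q t)) \<psi>"
      unfolding quantum_L_def Let_def by (intro last_block_constraint_imp_gauged) blast
    with L show "\<exists>\<psi>s. quantum_Lsharp N d hbar H \<gamma> \<psi>s \<and> gauged \<psi>s \<psi>"
      using quantum_L_iff_quantum_Lsharp assms(5,6) by blast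
  qed (use quantum_L_iff_quantum_Lsharp assms(5,6) in blast)
  then show ?thesis
    unfolding gauged_def phase_def .
qed

end
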